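(* Let $\Phi$ be the flow of the vector field $F$ on $T_1\Delta$ defined in the context. Then $\Phi_t(\Delta)\subset\Delta$ for all $t\ge0$, and for each $I\subseteq E$, for all $v\in\Delta_I$ and all $t\in\mathbb R$, $\Phi_t(v)\in\Delta$ if and only if $\Phi_t(v)\in\Delta_I$.
   Context: Let $N\ge2$, $E=\{1,\dots,N\}$, $\alpha>1$, and let $A=(A_{i,j})_{i,j\le N}$ be a symmetric matrix with nonnegative entries, $A_{i,j}>0$ for $i\ne j$, and $\sum_j A_{i,j}$ independent of $i$. Let $\Delta=\{v\in\mathbb R_+^N:\ \sum_i v_i=1,\ v_i\le 3/4 \text{ whenever } A_{i,i}=0\}$. For $v\in\Delta$ let $v^\alpha=(v_1^\alpha,\dots,v_N^\alpha)$, $H(v)=\langle Av^\alpha,v^\alpha\rangle=\sum_{i,j}A_{i,j}v_i^\alpha v_j^\alpha$ (which is positive on $\Delta$) and $\pi_i(v)=v_i^\alpha(Av^\alpha)_i/H(v)$. For $r=0,1$ let $T_r\Delta=\{v\in\mathbb R^N:\sum_iv_i=r\}$, let $\imath:T_1\Delta\to\Delta$ be the nearest-point projection $\imath(v)=\mathrm{argmin}\{\|y-v\|:y\in\Delta\}$, and let $F:T_1\Delta\to T_0\Delta$, $F(v)=-v+\pi(\imath(v))$; $F$ is Lipschitz and $\Phi:\mathbb R\times T_1\Delta\to T_1\Delta$ denotes its flow. For $I\subseteq E$, $\Delta_I=\{v\in\Delta: v_i=0\ \forall i\in E\setminus I\}$. *)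

theory Defs
  imports "HOL-Analysis.Analysis"
begin

text \<open>Vectors in R^N are modelled as real^'n with 'n a finite index type (E = UNIV).
  A is a real^'n^'n matrix, with entries A$i$j.\<close>

definition Delta :: "real^'n^'n \<Rightarrow> (real^'n) set" where
  "Delta A = {v. (\<forall>i. 0 \<le> v$i) \<and> (\<Sum>i\<in>UNIV. v$i) = 1 \<and>
                  (\<forall>i. A$i$i = 0 \<longrightarrow> v$i \<le> 3/4)}"

definition Delta_I :: "real^'n^'n \<Rightarrow> 'n set \<Rightarrow> (real^'n) set" where
  "Delta_I A I = {v \<in> Delta A. \<forall>i \<in> UNIV - I. v$i = 0}"

definition T_Delta :: "real \<Rightarrow> (real^'n) set" where
  "T_Delta r = {v. (\<Sum>i\<in>UNIV. v$i) = r}"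

definition vpow :: "real \<Rightarrow> real^'n \<Rightarrow> real^'n" where
  "vpow \<alpha> v = (\<chi> i. (v$i) powr \<alpha>)"

definition Hfun :: "real^'n^'n \<Rightarrow> real \<Rightarrow> real^'n \<Rightarrow> real" where
  "Hfun A \<alpha> v = (\<Sum>i\<in>UNIV. \<Sum>j\<in>UNIV. A$i$j * (v$i) powr \<alpha> * (v$j) powr \<alpha>)"

definition pifun :: "real^'n^'n \<Rightarrow> real \<Rightarrow> real^'n \<Rightarrow> real^'n" where
  "pifun A \<alpha> v = (\<chi> i. (v$i) powr \<alpha> * (A *v vpow \<alpha> v)$i / Hfun A \<alpha> v)"

definition proj_Delta :: "real^'n^'n \<Rightarrow> real^'n \<Rightarrow> real^'n" where
  "proj_Delta A v = closest_point (Delta A) v"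

definition Ffield :: "real^'n^'n \<Rightarrow> real \<Rightarrow> real^'n \<Rightarrow> real^'n" where
  "Ffield A \<alpha> v = - v + pifun A \<alpha> (proj_Delta A v)"

text \<open>Phi is the flow of F on T_1 Delta: each trajectory starts at v, stays in T_1 Delta
  and solves the ODE x' = F x for all real times.  (F is Lipschitz, so this flow exists
  and is unique.)\<close>
definition is_flow :: "real^'n^'n \<Rightarrow> real \<Rightarrow> (real \<Rightarrow> real^'n \<Rightarrow> real^'n) \<Rightarrow> bool" where
  "is_flow A \<alpha> \<Phi> \<longleftrightarrow> (\<forall>v \<in> T_Delta 1. \<Phi> 0 v = v \<and>
      (\<forall>t. \<Phi> t v \<in> T_Delta 1 \<and>
           ((\<lambda>s. \<Phi> s v) has_vector_derivative Ffield A \<alpha> (\<Phi> t v)) (at t)))"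

end

theory Submission
  imports Defs
begin

text \<open>Each coordinate of a trajectory solves a relaxation equation \<open>u' = -u + q\<close> with
  \<open>q = \<pi>\<^sub>i \<ge> 0\<close>, and \<open>\<pi>\<^sub>i \<le> 1/2\<close> whenever \<open>A\<^sub>i\<^sub>i = 0\<close> (the cross terms of \<open>H\<close> count
  \<open>\<pi>\<^sub>i\<close>'s numerator twice).  Since \<open>exp t \<cdot> u t\<close> moves monotonically, the bounds
  \<open>0 \<le> u\<close> and \<open>u \<le> 3/4\<close> propagate forward in time, so \<open>\<Delta>\<close> is forward invariant.
  A vanishing coordinate stays zero: backward in time because \<open>exp t \<cdot> u t\<close> is
  nondecreasing, forward in time by Gronwall, since on \<open>\<Delta>\<close> some pair \<open>k, j\<close> with
  \<open>A\<^sub>k\<^sub>j > 0\<close> carries mass \<open>\<ge> 1/(4N)\<close> in both coordinates, which bounds \<open>H\<close> below and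
  hence \<open>\<pi>\<^sub>i \<le> K v\<^sub>i\<close>.\<close>

lemma relaxation_exp_mono:
  fixes u q :: "real \<Rightarrow> real"
  assumes deriv: "\<And>s. (u has_real_derivative - u s + q s) (at s)"
    and q: "\<And>s. a \<le> s \<Longrightarrow> s \<le> b \<Longrightarrow> 0 \<le> q s" and "a \<le> b"
  shows "exp a * u a \<le> exp b * u b"
proof (rule deriv_nonneg_imp_mono[where g = "\<lambda>s. exp s * u s" and g' = "\<lambda>s. exp s * q s"])
  fix s assume s: "s \<in> {a..b}"
  have "((\<lambda>s. exp s * u s) has_real_derivative exp s * u s + exp s * (- u s + q s)) (at s)"
    by (auto intro!: derivative_eq_intros deriv)
  then show "((\<lambda>s. exp s * u s) has_real_derivative exp s * q s) (at s)"
    by (simp add: algebra_simps)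
  show "0 \<le> exp s * q s" using q s by auto
qed fact

lemma relaxation_nonneg:
  fixes u q :: "real \<Rightarrow> real"
  assumes deriv: "\<And>s. (u has_real_derivative - u s + q s) (at s)"
    and q: "\<And>s. a \<le> s \<Longrightarrow> s \<le> b \<Longrightarrow> 0 \<le> q s" and "0 \<le> u a" and ab: "a \<le> b"
  shows "0 \<le> u b"
proof -
  have "0 \<le> exp a * u a" using \<open>0 \<le> u a\<close> by simp
  also have "\<dots> \<le> exp b * u b" using relaxation_exp_mono[OF deriv q ab] by simp
  finally show ?thesis by (simp add: zero_le_mult_iff)
qed

lemma relaxation_upper_bound:
  fixes u q :: "real \<Rightarrow> real"
  assumes deriv: "\<And>s. (u has_real_derivative - u s + q s) (at s)"
    and q: "\<And>s. a \<le> s \<Longrightarrow> s \<le> b \<Longrightarrow> q s \<le> c" and "u a \<le> c" and "a \<le> b"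
  shows "u b \<le> c"
proof -
  have "((\<lambda>s. c - u s) has_real_derivative - (c - u s) + (c - q s)) (at s)" for s
    by (rule derivative_eq_intros refl deriv | simp)+
  then have "0 \<le> c - u b"
    by (rule relaxation_nonneg[where a = a]) (use assms in auto)
  then show ?thesis by simp
qed

lemma relaxation_gronwall:
  fixes u q :: "real \<Rightarrow> real"
  assumes deriv: "\<And>s. (u has_real_derivative - u s + q s) (at s)"
    and q: "\<And>s. a \<le> s \<Longrightarrow> s \<le> b \<Longrightarrow> q s \<le> K * u s" and "u a = 0" and "a \<le> b"
  shows "u b \<le> 0"
proof -
  have "exp ((1 - K) * b) * u b \<le> exp ((1 - K) * a) * u a"
  proof (rule deriv_nonpos_imp_antimono[where g = "\<lambda>s. exp ((1 - K) * s) * u s" and g' = "\<lambda>s. exp ((1 - K) * s) * (q s - K * u s)"])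
    fix s assume s: "s \<in> {a..b}"
    show "((\<lambda>s. exp ((1 - K) * s) * u s) has_real_derivative
        exp ((1 - K) * s) * (q s - K * u s)) (at s)"
      by (rule derivative_eq_intros refl deriv | simp add: algebra_simps)+
    show "exp ((1 - K) * s) * (q s - K * u s) \<le> 0"
      using q s by (simp add: mult_nonneg_nonpos)
  qed fact
  then show ?thesis using \<open>u a = 0\<close> by (simp add: mult_le_0_iff)
qed

lemma exists_ge_average:
  fixes f :: "'a \<Rightarrow> real"
  assumes "finite S" "S \<noteq> {}"
  shows "\<exists>j\<in>S. (\<Sum>k\<in>S. f k) \<le> real (card S) * f j"
proof -
  have "Max (f ` S) \<in> f ` S" using assms by (intro Max_in) auto
  then obtain j where j: "j \<in> S" "f j = Max (f ` S)" by auto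
  have "(\<Sum>k\<in>S. f k) \<le> real (card S) * f j"
    using sum_bounded_above[of S f "f j"] j assms by simp
  with j show ?thesis by blast
qed

lemma Delta_nonneg: "p \<in> Delta A \<Longrightarrow> 0 \<le> p$i"
  by (simp add: Delta_def)

lemma Delta_le_1:
  assumes "p \<in> Delta A" shows "p$i \<le> 1"
proof -
  have "p$i \<le> (\<Sum>j\<in>UNIV. p$j)"
    by (rule member_le_sum) (use assms in \<open>auto simp: Delta_def\<close>)
  with assms show ?thesis by (simp add: Delta_def)
qed

lemma Delta_subset_T_Delta: "Delta A \<subseteq> T_Delta 1"
  by (auto simp: Delta_def T_Delta_def)

lemma Delta_exists_heavy_pair:
  fixes A :: "real^'n::finite^'n"
  assumes card: "CARD('n) \<ge> 2" and nn: "\<forall>i j. 0 \<le> A$i$j"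
    and pos: "\<forall>i j. i \<noteq> j \<longrightarrow> A$i$j > 0" and p: "p \<in> Delta A"
  obtains k j where "A$k$j > 0" "1 / (4 * real CARD('n)) \<le> p$k" "1 / (4 * real CARD('n)) \<le> p$j"
proof -
  define N where "N = real CARD('n)"
  have N: "2 \<le> N" using card by (simp add: N_def)
  obtain m where "(\<Sum>k\<in>UNIV. p$k) \<le> N * p$m"
    using exists_ge_average[of "UNIV :: 'n set" "\<lambda>k. p$k"] by (auto simp: N_def)
  then have "1 \<le> N * p$m" using p by (simp add: Delta_def)
  then have pm: "1 / (4 * N) \<le> p$m" using N by (simp add: field_simps)
  show ?thesis
  proof (cases "A$m$m > 0")
    case True
    with pm show ?thesis by (intro that[of m m]) (auto simp: N_def)
  next
    case False
    define S where "S = UNIV - {m}"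
    have cS: "card S = CARD('n) - 1" by (simp add: S_def)
    with card have "S \<noteq> {}" by auto
    then obtain j where jS: "j \<in> S" and j: "(\<Sum>k\<in>S. p$k) \<le> real (card S) * p$j"
      using exists_ge_average[of S "\<lambda>k. p$k"] by auto
    have "A$m$m = 0" using False nn[rule_format, of m m] by linarith
    then have "p$m \<le> 3/4" using p by (simp add: Delta_def)
    moreover have "(\<Sum>k\<in>UNIV. p$k) = p$m + (\<Sum>k\<in>S. p$k)"
      by (simp add: S_def sum.remove)
    ultimately have "1/4 \<le> (\<Sum>k\<in>S. p$k)" using p by (simp add: Delta_def)
    also have "\<dots> \<le> real (card S) * p$j" by (fact j)
    also have "\<dots> \<le> N * p$j"
      using cS Delta_nonneg[OF p, of j] by (intro mult_right_mono) (auto simp: N_def)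
    finally have "1 / (4 * N) \<le> p$j" using N by (simp add: field_simps)
    moreover have "A$m$j > 0" using pos jS by (auto simp: S_def)
    ultimately show ?thesis using pm by (intro that[of m j]) (auto simp: N_def)
  qed
qed

lemma pifun_component:
  "pifun A \<alpha> p $ i = p$i powr \<alpha> * (\<Sum>j\<in>UNIV. A$i$j * p$j powr \<alpha>) / Hfun A \<alpha> p"
  by (simp add: pifun_def matrix_vector_mult_def vpow_def)

lemma Hfun_ge_term:
  assumes "\<forall>i j. 0 \<le> A$i$j"
  shows "A$k$j * p$k powr \<alpha> * p$j powr \<alpha> \<le> Hfun A \<alpha> p"
proof -
  have "A$k$j * p$k powr \<alpha> * p$j powr \<alpha> \<le> (\<Sum>j\<in>UNIV. A$k$j * p$k powr \<alpha> * p$j powr \<alpha>)"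
    by (rule member_le_sum) (use assms in auto)
  also have "\<dots> \<le> Hfun A \<alpha> p" unfolding Hfun_def
    by (rule member_le_sum[where f = "\<lambda>k. \<Sum>j\<in>UNIV. A$k$j * p$k powr \<alpha> * p$j powr \<alpha>"])
      (use assms in \<open>auto intro: sum_nonneg\<close>)
  finally show ?thesis .
qed

lemma Hfun_lower_bound:
  fixes A :: "real^'n::finite^'n"
  assumes card: "CARD('n) \<ge> 2" and "0 \<le> \<alpha>" and nn: "\<forall>i j. 0 \<le> A$i$j"
    and pos: "\<forall>i j. i \<noteq> j \<longrightarrow> A$i$j > 0"
  obtains h where "h > 0" "\<And>p. p \<in> Delta A \<Longrightarrow> h \<le> Hfun A \<alpha> p"
proof -
  define d where "d = 1 / (4 * real CARD('n))"
  define S where "S = {A$k$j | k j. A$k$j > 0}"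
  have "finite S"
    by (rule finite_subset[of _ "range (\<lambda>(k, j). A$k$j)"]) (auto simp: S_def)
  obtain k j :: 'n where "j \<noteq> k"
    using card card_le_Suc0_iff_eq[of "UNIV :: 'n set"] by auto
  with pos have "A$k$j > 0" by auto
  then have "A$k$j \<in> S" unfolding S_def by blast
  then have Smin: "Min S \<in> S" "\<And>a. a \<in> S \<Longrightarrow> Min S \<le> a"
    using \<open>finite S\<close> by (auto intro: Min_in)
  then have "Min S > 0" by (auto simp: S_def)
  show ?thesis
  proof (rule that[of "Min S * d powr \<alpha> * d powr \<alpha>"])
    show "0 < Min S * d powr \<alpha> * d powr \<alpha>" using \<open>Min S > 0\<close> by (simp add: d_def)
    fix p assume "p \<in> Delta A"
    then obtain k j where kj: "A$k$j > 0" "d \<le> p$k" "d \<le> p$j"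
      using Delta_exists_heavy_pair[OF card nn pos] unfolding d_def by metis
    have "d powr \<alpha> \<le> p$k powr \<alpha>" "d powr \<alpha> \<le> p$j powr \<alpha>"
      using kj \<open>0 \<le> \<alpha>\<close> by (auto simp: d_def intro!: powr_mono2)
    moreover have "Min S \<le> A$k$j" using kj Smin(2) by (auto simp: S_def)
    ultimately have "Min S * d powr \<alpha> * d powr \<alpha> \<le> A$k$j * p$k powr \<alpha> * p$j powr \<alpha>"
      using \<open>Min S > 0\<close> by (intro mult_mono) auto
    also have "\<dots> \<le> Hfun A \<alpha> p" by (rule Hfun_ge_term[OF nn])
    finally show "Min S * d powr \<alpha> * d powr \<alpha> \<le> Hfun A \<alpha> p" .
  qed
qed

lemma pifun_nonneg:
  assumes "\<forall>i j. 0 \<le> A$i$j"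
  shows "0 \<le> pifun A \<alpha> p $ i"
  using assms unfolding pifun_component Hfun_def
  by (auto intro!: divide_nonneg_nonneg mult_nonneg_nonneg sum_nonneg)

lemma pifun_le_half_if_zero_diagonal:
  fixes A :: "real^'n::finite^'n"
  assumes nn: "\<forall>i j. 0 \<le> A$i$j" and sym: "\<forall>i j. A$i$j = A$j$i" and zero: "A$i$i = 0"
  shows "pifun A \<alpha> p $ i \<le> 1/2"
proof -
  define y where "y j = p$j powr \<alpha>" for j
  define T where "T = y i * (\<Sum>j\<in>UNIV. A$i$j * y j)"
  have y: "0 \<le> y j" for j by (simp add: y_def)
  have T: "0 \<le> T" using nn y by (auto simp: T_def intro!: sum_nonneg mult_nonneg_nonneg)
  have "Hfun A \<alpha> p = (\<Sum>j\<in>UNIV. A$i$j * y i * y j) + (\<Sum>k\<in>UNIV-{i}. \<Sum>j\<in>UNIV. A$k$j * y k * y j)"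
    by (simp add: Hfun_def y_def sum.remove)
  also have "(\<Sum>j\<in>UNIV. A$i$j * y i * y j) = T"
    by (simp add: T_def sum_distrib_left algebra_simps)
  also have "(\<Sum>k\<in>UNIV-{i}. A$k$i * y k * y i) \<le> (\<Sum>k\<in>UNIV-{i}. \<Sum>j\<in>UNIV. A$k$j * y k * y j)"
    by (intro sum_mono member_le_sum[where f = "\<lambda>j. A$_$j * y _ * y j"]) (use nn y in auto)
  moreover have "(\<Sum>k\<in>UNIV-{i}. A$k$i * y k * y i) = T"
    using sum.remove[of UNIV i "\<lambda>k. A$k$i * y k * y i"] zero sym
    by (simp add: T_def sum_distrib_left algebra_simps)
  ultimately have H: "2 * T \<le> Hfun A \<alpha> p" by simp
  have "pifun A \<alpha> p $ i = T / Hfun A \<alpha> p"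
    by (simp add: pifun_component T_def y_def)
  also have "\<dots> \<le> 1/2"
    using H T by (cases "Hfun A \<alpha> p = 0") (auto simp: divide_simps)
  finally show ?thesis .
qed

lemma pifun_le_linear:
  fixes A :: "real^'n::finite^'n"
  assumes "1 \<le> \<alpha>" and nn: "\<forall>i j. 0 \<le> A$i$j" and p: "\<And>j. 0 \<le> p$j \<and> p$j \<le> 1"
    and h: "0 < h" "h \<le> Hfun A \<alpha> p"
  shows "pifun A \<alpha> p $ i \<le> (\<Sum>j\<in>UNIV. A$i$j) / h * p$i"
proof -
  define y where "y j = p$j powr \<alpha>" for j
  define S where "S = (\<Sum>j\<in>UNIV. A$i$j * y j)"
  have y: "0 \<le> y j" "y j \<le> 1" for j
    using p[of j] \<open>1 \<le> \<alpha>\<close> by (auto simp: y_def intro: powr_le1)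
  have "p$i powr \<alpha> \<le> p$i powr 1"
    using p[of i] \<open>1 \<le> \<alpha>\<close> by (intro powr_mono') auto
  then have yi: "y i \<le> p$i" using p[of i] by (simp add: y_def)
  have S: "0 \<le> S" "S \<le> (\<Sum>j\<in>UNIV. A$i$j)"
    unfolding S_def using nn y by (auto intro!: sum_nonneg) (auto intro!: sum_mono mult_left_le)
  have "pifun A \<alpha> p $ i = y i * S / Hfun A \<alpha> p"
    by (simp add: pifun_component S_def y_def)
  also have "\<dots> \<le> y i * S / h"
    using h y S by (intro divide_left_mono) auto
  also have "\<dots> \<le> p$i * (\<Sum>j\<in>UNIV. A$i$j) / h"
    using h y yi S p[of i] by (intro divide_right_mono mult_mono) auto
  finally show ?thesis by (simp add: mult.commute)
qed

definition Ffield_trajectory :: "real^'n^'n \<Rightarrow> real \<Rightarrow> (real \<Rightarrow> real^'n) \<Rightarrow> bool" where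
  "Ffield_trajectory A \<alpha> x \<longleftrightarrow>
    (\<forall>s. x s \<in> T_Delta 1 \<and> (x has_vector_derivative Ffield A \<alpha> (x s)) (at s))"

lemma is_flow_trajectory:
  assumes "is_flow A \<alpha> \<Phi>" "v \<in> T_Delta 1"
  shows "Ffield_trajectory A \<alpha> (\<lambda>s. \<Phi> s v)" "\<Phi> 0 v = v"
  using assms by (auto simp: is_flow_def Ffield_trajectory_def)

lemma Ffield_trajectory_component:
  assumes "Ffield_trajectory A \<alpha> x"
  shows "((\<lambda>s. x s $ i) has_real_derivative - x s $ i + pifun A \<alpha> (proj_Delta A (x s)) $ i) (at s)"
proof -
  have "(x has_vector_derivative Ffield A \<alpha> (x s)) (at s)"
    using assms by (simp add: Ffield_trajectory_def)
  from bounded_linear.has_vector_derivative[OF bounded_linear_vec_nth this]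
  show ?thesis by (simp add: has_real_derivative_iff_has_vector_derivative Ffield_def)
qed

lemma Delta_forward_invariant:
  fixes A :: "real^'n::finite^'n"
  assumes nn: "\<forall>i j. 0 \<le> A$i$j" and sym: "\<forall>i j. A$i$j = A$j$i"
    and x: "Ffield_trajectory A \<alpha> x" and xa: "x a \<in> Delta A" and "a \<le> b"
  shows "x b \<in> Delta A"
proof -
  define q where "q i s = pifun A \<alpha> (proj_Delta A (x s)) $ i" for i s
  have deriv: "((\<lambda>s. x s $ i) has_real_derivative - x s $ i + q i s) (at s)" for i s
    unfolding q_def by (rule Ffield_trajectory_component[OF x])
  have "0 \<le> x b $ i" for i
    using relaxation_nonneg[OF deriv _ Delta_nonneg[OF xa] \<open>a \<le> b\<close>] pifun_nonneg[OF nn]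
    by (simp add: q_def)
  moreover have "x b $ i \<le> 3/4" if "A$i$i = 0" for i
  proof (rule relaxation_upper_bound[OF deriv _ _ \<open>a \<le> b\<close>])
    show "q i s \<le> 3/4" for s
      using pifun_le_half_if_zero_diagonal[OF nn sym that, of \<alpha> "proj_Delta A (x s)"]
      by (simp add: q_def)
    show "x a $ i \<le> 3/4" using xa that by (simp add: Delta_def)
  qed
  moreover have "(\<Sum>i\<in>UNIV. x b $ i) = 1"
    using x by (simp add: Ffield_trajectory_def T_Delta_def)
  ultimately show ?thesis by (simp add: Delta_def)
qed

lemma trajectory_coordinate_stays_zero:
  fixes A :: "real^'n::finite^'n"
  assumes card: "CARD('n) \<ge> 2" and \<alpha>: "\<alpha> > 1" and nn: "\<forall>i j. 0 \<le> A$i$j"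
    and sym: "\<forall>i j. A$i$j = A$j$i" and pos: "\<forall>i j. i \<noteq> j \<longrightarrow> A$i$j > 0"
    and x: "Ffield_trajectory A \<alpha> x" and xa: "x a \<in> Delta A" and zero: "x a $ i = 0"
    and xt: "x t \<in> Delta A"
  shows "x t $ i = 0"
proof -
  note deriv = Ffield_trajectory_component[OF x, of i]
  have "x t $ i \<le> 0"
  proof (cases "t < a")
    case True
    then have "exp t * x t $ i \<le> exp a * x a $ i"
      using pifun_nonneg[OF nn] by (intro relaxation_exp_mono[OF deriv]) auto
    with zero show ?thesis by (simp add: mult_le_0_iff)
  next
    case False
    obtain h where h: "h > 0" "\<And>p. p \<in> Delta A \<Longrightarrow> h \<le> Hfun A \<alpha> p"
      using Hfun_lower_bound[OF card _ nn pos, of \<alpha>] \<alpha> by auto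
    show ?thesis
    proof (rule relaxation_gronwall[OF deriv, where K = "(\<Sum>j\<in>UNIV. A$i$j) / h"])
      fix s assume "a \<le> s" "s \<le> t"
      have xs: "x s \<in> Delta A" by (rule Delta_forward_invariant[OF nn sym x xa \<open>a \<le> s\<close>])
      then have "proj_Delta A (x s) = x s" by (simp add: proj_Delta_def closest_point_self)
      moreover have "pifun A \<alpha> (x s) $ i \<le> (\<Sum>j\<in>UNIV. A$i$j) / h * x s $ i"
        using xs \<alpha> by (intro pifun_le_linear[OF _ nn _ h(1) h(2)]) (auto intro: Delta_nonneg Delta_le_1)
      ultimately show "pifun A \<alpha> (proj_Delta A (x s)) $ i \<le> (\<Sum>j\<in>UNIV. A$i$j) / h * x s $ i"
        by simp
    qed (use zero False in auto)
  qed
  with Delta_nonneg[OF xt, of i] show ?thesis by simp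
qed

theorem lemma3p1:
  fixes A :: "real^'n::finite^'n" and \<alpha> :: real
    and \<Phi> :: "real \<Rightarrow> real^'n \<Rightarrow> real^'n"
  assumes "CARD('n) \<ge> 2"
    and "\<alpha> > 1"
    and "\<forall>i j. A$i$j = A$j$i"
    and "\<forall>i j. 0 \<le> A$i$j"
    and "\<forall>i j. i \<noteq> j \<longrightarrow> A$i$j > 0"
    and "\<forall>i k. (\<Sum>j\<in>UNIV. A$i$j) = (\<Sum>j\<in>UNIV. A$k$j)"
    and "is_flow A \<alpha> \<Phi>"
  shows "(\<forall>t \<ge> 0. \<forall>v \<in> Delta A. \<Phi> t v \<in> Delta A) \<and>
         (\<forall>I. \<forall>v \<in> Delta_I A I. \<forall>t. \<Phi> t v \<in> Delta A \<longleftrightarrow> \<Phi> t v \<in> Delta_I A I)"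
proof -
  have traj: "Ffield_trajectory A \<alpha> (\<lambda>s. \<Phi> s v)" "\<Phi> 0 v = v" if "v \<in> Delta A" for v
    using is_flow_trajectory[OF assms(7)] Delta_subset_T_Delta that by auto
  have "\<Phi> t v \<in> Delta A" if "v \<in> Delta A" "0 \<le> t" for v t
    using Delta_forward_invariant[OF assms(4,3) traj(1), of v 0 t] traj(2) that by simp
  moreover have "\<Phi> t v $ i = 0" if "v \<in> Delta_I A I" "i \<notin> I" "\<Phi> t v \<in> Delta A" for I v t i
    using trajectory_coordinate_stays_zero[OF assms(1,2,4,3,5) traj(1), of v 0 i t] traj(2) that
    by (simp add: Delta_I_def)
  ultimately show ?thesis by (auto simp: Delta_I_def)
qed

end
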